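(* Let $n,k$ be integers with $1\le k\le n-3$, let $F$ be a finite field with $|F|\ge 2n$, let $\{\lambda_{i,j}: i\in[n],\ j\in\{0,1\}\}$ be $2n$ distinct elements of $F$, and let $\mathcal{C}$ be the set of all $C=(C_1,\dots,C_n)$, $C_i=(c_{i,b,a}: b\in\{1,2,3\},\ a\in\{0,\dots,2^n-1\})$, satisfying $\sum_{i=1}^n \lambda_{i,a_i}^t c_{i,b,a}=0$ for all $t\in\{0,\dots,n-k-1\}$, $b\in\{1,2,3\}$, $a\in\{0,\dots,2^n-1\}$. Let $\mathcal{R}\subseteq[n]\setminus\{1,2\}$ with $|\mathcal{R}|=k+1$. Then for every $C\in\mathcal{C}$: (1) the values $\{c_{1,b,a}: a\in\{0,\dots,2^n-1\},\ b\in\{1,2\}\}\cup\{c_{2,1,a}+c_{2,2,a(1,a_1\oplus 1)}: a\in\{0,\dots,2^n-1\}\}$ are uniquely determined by the values $\{c_{i,1,a}+c_{i,2,a(1,a_1\oplus 1)}: a\in\{0,\dots,2^n-1\},\ i\in\mathcal{R}\}$; (2) the values $\{c_{2,b,a}: a\in\{0,\dots,2^n-1\},\ b\in\{1,3\}\}\cup\{c_{1,1,a}+c_{1,3,a(2,a_2\oplus 1)}: a\in\{0,\dots,2^n-1\}\}$ are uniquely determined by the values $\{c_{i,1,a}+c_{i,3,a(2,a_2\oplus 1)}: a\in\{0,\dots,2^n-1\},\ i\in\mathcal{R}\}$. (Here "uniquely determined" means: any two codewords of $\mathcal{C}$ that agree on the latter values agree on the former values.)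
   Context: $[n]=\{1,\dots,n\}$. For $a\in\{0,\dots,2^n-1\}$, $(a_1,\dots,a_n)\in\{0,1\}^n$ denotes its $n$-digit binary expansion, and $a$ is identified with this tuple. For $i\in[n]$, $u\in\{0,1\}$, $a(i,u)$ denotes the element obtained from $a$ by replacing the $i$th digit $a_i$ by $u$; $\oplus$ denotes addition modulo 2. *)

theory Defs
  imports Main
begin

text \<open>i-th binary digit (i = 1..n) of a number a in {0..2^n-1};
  convention: a = sum of a_i * 2^(i-1).\<close>
definition digit :: "nat \<Rightarrow> nat \<Rightarrow> nat" where
  "digit a i = (a div 2 ^ (i - 1)) mod 2"

definition setdig :: "nat \<Rightarrow> nat \<Rightarrow> nat \<Rightarrow> nat" where
  "setdig a i u = a - digit a i * 2 ^ (i - 1) + u * 2 ^ (i - 1)"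

text \<open>The code: C i b a is c_{i,b,a}, for i in [n], b in {1,2,3}, a < 2^n.\<close>
definition code :: "nat \<Rightarrow> nat \<Rightarrow> (nat \<Rightarrow> nat \<Rightarrow> 'a::field) \<Rightarrow> (nat \<Rightarrow> nat \<Rightarrow> nat \<Rightarrow> 'a) set" where
  "code n k lam = {C. \<forall>t < n - k. \<forall>b \<in> {1,2,3}. \<forall>a < 2 ^ n.
      (\<Sum>i = 1..n. (lam i (digit a i)) ^ t * C i b a) = 0}"

end

(*
  Fix a column a, let a' be a with its p-th digit flipped, and let E be the difference of two
  codewords. Adding the parity checks of symbol b in column a and of symbol q in column a'
  gives, for every t < n - k, a check over the 2n points lam i u of a vector whose entry at
  lam i (a_i) is E i b a + E i q a' for i \<noteq> p, and whose entries at the two points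
  lam p 0, lam p 1 are E p b a and E p q a'. By hypothesis it vanishes at the nodes of R, so
  it is supported on at most n - |R| + 1 \<le> n - k distinct points, and the Vandermonde system
  forces it to vanish. Running this for both a and a' gives the claim for
  (p, b, q) = (1, 1, 2) and (2, 1, 3).
*)

theory Submission
  imports Defs
begin

abbreviation flip_digit :: "nat \<Rightarrow> nat \<Rightarrow> nat" where
  "flip_digit a i \<equiv> setdig a i ((digit a i + 1) mod 2)"

lemma digit_eq_bit: "digit a i = of_bool (bit a (i - 1))"
  unfolding digit_def by (simp add: bit_iff_odd odd_iff_mod_2_eq_one)

lemma unset_bit_add_power_nat: "bit (a::nat) m \<Longrightarrow> unset_bit m a + 2 ^ m = a"
proof -
  assume "bit a m"
  then have "set_bit m (unset_bit m a) = a"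
    by (intro bit_eqI) (auto simp: bit_simps)
  then show ?thesis
    by (simp add: set_bit_eq bit_simps)
qed

lemma flip_digit_eq_flip_bit: "flip_digit a i = flip_bit (i - 1) a"
proof (cases "bit a (i - 1)")
  case True
  then show ?thesis
    unfolding setdig_def digit_eq_bit flip_bit_eq_if
    using unset_bit_add_power_nat[of a "i - 1"] by simp
next
  case False
  then show ?thesis
    unfolding setdig_def digit_eq_bit flip_bit_eq_if by (simp add: set_bit_eq)
qed

lemma digit_flip_digit:
  "1 \<le> i \<Longrightarrow> 1 \<le> j \<Longrightarrow> digit (flip_digit a i) j = (if j = i then 1 - digit a i else digit a j)"
  unfolding flip_digit_eq_flip_bit unfolding digit_eq_bit by (auto simp: bit_flip_bit_iff)

lemma flip_digit_flip_digit: "flip_digit (flip_digit a i) i = a"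
  unfolding flip_digit_eq_flip_bit by (rule bit_eqI) (auto simp: bit_flip_bit_iff)

lemma flip_digit_less_power:
  "i \<in> {1..n} \<Longrightarrow> a < 2 ^ n \<Longrightarrow> flip_digit a i < 2 ^ n"
  unfolding flip_digit_eq_flip_bit by (auto simp: take_bit_nat_eq_self_iff[symmetric] take_bit_flip_bit_eq)

lemma vandermonde_kernel_trivial:
  fixes x :: "'b \<Rightarrow> 'a::field"
  assumes "finite S" and "inj_on x S" and "\<forall>t<card S. (\<Sum>j\<in>S. x j ^ t * y j) = 0"
  shows "\<forall>j\<in>S. y j = 0"
  using assms
proof (induction S arbitrary: y rule: finite_induct)
  case empty
  then show ?case by simp
next
  case (insert j0 S)
  define y' where "y' j = (x j - x j0) * y j" for j
  have card: "card (insert j0 S) = Suc (card S)"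
    using insert.hyps by simp
  \<comment> \<open>Multiplying by \<open>x j - x j0\<close> eliminates \<open>j0\<close> and keeps \<open>card S\<close> of the equations.\<close>
  have "(\<Sum>j\<in>S. x j ^ t * y' j) = 0" if t: "t < card S" for t
  proof -
    have "(\<Sum>j\<in>S. x j ^ t * y' j) = (\<Sum>j\<in>insert j0 S. x j ^ t * y' j)"
      using insert.hyps by (simp add: y'_def)
    also have "\<dots> = (\<Sum>j\<in>insert j0 S. x j ^ Suc t * y j) - x j0 * (\<Sum>j\<in>insert j0 S. x j ^ t * y j)"
      by (simp add: y'_def sum_distrib_left sum_subtractf[symmetric] algebra_simps)
    also have "\<dots> = 0"
      using insert.prems(2) t card by (simp add: less_SucI del: power_Suc)
    finally show ?thesis .
  qed
  moreover have "inj_on x S"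
    using insert.prems(1) by auto
  ultimately have "\<forall>j\<in>S. y' j = 0"
    using insert.IH by blast
  moreover have "x j \<noteq> x j0" if "j \<in> S" for j
    using that insert.prems(1) insert.hyps(2) by (auto simp: inj_on_def)
  ultimately have y_S: "\<forall>j\<in>S. y j = 0"
    by (auto simp: y'_def)
  have "(\<Sum>j\<in>insert j0 S. x j ^ 0 * y j) = 0"
    using insert.prems(2) unfolding card by blast
  then have "y j0 = 0"
    using insert.hyps y_S by simp
  with y_S show ?case by simp
qed

lemma code_check:
  "E \<in> code n k lam \<Longrightarrow> t < n - k \<Longrightarrow> b \<in> {1,2,3} \<Longrightarrow> a < 2 ^ n \<Longrightarrow>
    (\<Sum>i=1..n. lam i (digit a i) ^ t * E i b a) = 0"
  unfolding code_def by blast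

lemma diff_mem_code:
  "C \<in> code n k lam \<Longrightarrow> D \<in> code n k lam \<Longrightarrow> (\<lambda>i b a. C i b a - D i b a) \<in> code n k lam"
  unfolding code_def by (simp add: right_diff_distrib sum_subtractf)

text \<open>A vector indexed by the \<open>2n\<close> evaluation points: \<open>(i, u)\<close> stands for \<open>lam i u\<close>.\<close>
definition paired_column ::
    "(nat \<Rightarrow> nat \<Rightarrow> nat \<Rightarrow> 'a::comm_monoid_add) \<Rightarrow> nat \<Rightarrow> nat \<Rightarrow> nat \<Rightarrow> nat \<Rightarrow> nat \<times> nat \<Rightarrow> 'a" where
  "paired_column E b a q a' = (\<lambda>(i, u).
     (if u = digit a i then E i b a else 0) + (if u = digit a' i then E i q a' else 0))"

lemma paired_column_check:
  assumes E: "E \<in> code n k lam" and a: "a < 2 ^ n" "a' < 2 ^ n"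
    and b: "b \<in> {1,2,3}" and q: "q \<in> {1,2,3}" and t: "t < n - k"
  shows "(\<Sum>(i, u)\<in>{1..n} \<times> {0,1}. lam i u ^ t * paired_column E b a q a' (i, u)) = 0"
proof -
  have pair: "(\<Sum>u\<in>{0,1}. lam i u ^ t * paired_column E b a q a' (i, u))
      = lam i (digit a i) ^ t * E i b a + lam i (digit a' i) ^ t * E i q a'" for i
    by (simp add: paired_column_def digit_eq_bit distrib_left)
  have "(\<Sum>(i, u)\<in>{1..n} \<times> {0,1}. lam i u ^ t * paired_column E b a q a' (i, u))
      = (\<Sum>i=1..n. \<Sum>u\<in>{0,1}. lam i u ^ t * paired_column E b a q a' (i, u))"
    by (rule sum.cartesian_product[symmetric])
  also have "\<dots> = (\<Sum>i=1..n. lam i (digit a i) ^ t * E i b a)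
      + (\<Sum>i=1..n. lam i (digit a' i) ^ t * E i q a')"
    by (simp only: pair sum.distrib)
  also have "\<dots> = 0"
    using code_check[OF E t] a b q by simp
  finally show ?thesis .
qed

lemma card_insert_image_Diff_le:
  assumes "R \<subseteq> {1..n}" and "k < card R"
  shows "card (insert x (f ` ({1..n} - R))) \<le> n - k"
proof -
  have "card (insert x (f ` ({1..n} - R))) \<le> Suc (card (f ` ({1..n} - R)))"
    by (simp add: card_insert_if)
  also have "\<dots> \<le> Suc (card ({1..n} - R))"
    by (simp add: card_image_le)
  also have "\<dots> = Suc (n - card R)"
    using assms(1) by (simp add: card_Diff_subset finite_subset)
  also have "\<dots> \<le> n - k"
    using assms card_mono[OF _ assms(1)] by simp
  finally show ?thesis .
qed

lemma paired_column_flip_digit_support: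
  assumes p: "1 \<le> p" and R: "p \<notin> R"
    and R_zero: "\<forall>i\<in>R. E i b a + E i q (flip_digit a p) = 0"
    and i: "i \<in> {1..n}"
    and outside: "(i, u) \<notin> insert (p, digit (flip_digit a p) p) ((\<lambda>i. (i, digit a i)) ` ({1..n} - R))"
  shows "paired_column E b a q (flip_digit a p) (i, u) = 0"
proof (cases "i \<in> R")
  case True
  then have "digit (flip_digit a p) i = digit a i"
    using R i p digit_flip_digit by auto
  then show ?thesis
    using True R_zero by (simp add: paired_column_def)
next
  case False
  then have "u \<noteq> digit a i" and "i = p \<Longrightarrow> u \<noteq> digit (flip_digit a p) p"
    using outside i by auto
  then show ?thesis
    using i p digit_flip_digit by (auto simp: paired_column_def)
qed

lemma code_flip_repair:
  fixes E :: "nat \<Rightarrow> nat \<Rightarrow> nat \<Rightarrow> 'a::field"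
  assumes E: "E \<in> code n k lam" and lam_dist: "inj_on (\<lambda>(i, j). lam i j) ({1..n} \<times> {0, 1})"
    and p: "p \<in> {1..n}" and R: "R \<subseteq> {1..n} - {p}" and R_card: "k < card R"
    and b: "b \<in> {1,2,3}" and q: "q \<in> {1,2,3}" and a: "a < 2 ^ n"
    and R_zero: "\<forall>i\<in>R. E i b a + E i q (flip_digit a p) = 0"
  shows "E p b a = 0 \<and> E p q (flip_digit a p) = 0 \<and>
    (\<forall>i\<in>{1..n}. E i b a + E i q (flip_digit a p) = 0)"
proof -
  define a' where "a' = flip_digit a p"
  define w where "w = paired_column E b a q a'"
  define S where "S = insert (p, digit a' p) ((\<lambda>i. (i, digit a i)) ` ({1..n} - R))"
  have digit_a': "digit a' i = (if i = p then 1 - digit a p else digit a i)" if "1 \<le> i" for i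
    using digit_flip_digit[OF _ that, of p a] p by (simp add: a'_def)
  have digit_a'_p: "digit a' p \<noteq> digit a p"
    using digit_a'[of p] p by (auto simp: digit_eq_bit)
  have S_sub: "S \<subseteq> {1..n} \<times> {0, 1}"
    using p by (auto simp: S_def digit_eq_bit)
  have w_outside: "w (i, u) = 0" if "(i, u) \<in> {1..n} \<times> {0, 1} - S" for i u
    unfolding w_def a'_def using that p R
    by (intro paired_column_flip_digit_support[OF _ _ R_zero]) (auto simp: S_def a'_def)
  have card_S: "card S \<le> n - k"
    unfolding S_def using R R_card by (intro card_insert_image_Diff_le) auto
  have "(\<Sum>(i, u)\<in>S. lam i u ^ t * w (i, u)) = 0" if t: "t < card S" for t
  proof -
    have "(\<Sum>(i, u)\<in>S. lam i u ^ t * w (i, u))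
        = (\<Sum>(i, u)\<in>{1..n} \<times> {0, 1}. lam i u ^ t * w (i, u))"
      using S_sub w_outside by (intro sum.mono_neutral_left) auto
    also have "\<dots> = 0"
      unfolding w_def using paired_column_check[OF E a _ b q] flip_digit_less_power[OF p a] t card_S
      by (simp add: a'_def)
    finally show ?thesis .
  qed
  then have w_S: "\<forall>x\<in>S. w x = 0"
    using vandermonde_kernel_trivial[of S "\<lambda>(i, j). lam i j" w] inj_on_subset[OF lam_dist S_sub]
      S_sub by (simp add: finite_subset split_beta)
  have p_S: "(p, digit a p) \<in> S" "(p, digit a' p) \<in> S"
    using p R by (auto simp: S_def)
  have Ep: "E p b a = 0" "E p q a' = 0"
    using w_S p_S digit_a'_p by (auto simp: w_def paired_column_def)
  have "E i b a + E i q a' = 0" if i: "i \<in> {1..n}" for i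
  proof (cases "i \<in> R \<or> i = p")
    case True
    then show ?thesis
      using R_zero Ep by (auto simp: a'_def)
  next
    case False
    then have "(i, digit a i) \<in> S"
      using i by (simp add: S_def)
    then show ?thesis
      using w_S False i digit_a' by (auto simp: w_def paired_column_def)
  qed
  with Ep show ?thesis
    unfolding a'_def[symmetric] by blast
qed

lemma code_flip_repair_determines:
  fixes lam :: "nat \<Rightarrow> nat \<Rightarrow> 'a::field"
  assumes lam_dist: "inj_on (\<lambda>(i, j). lam i j) ({1..n} \<times> {0, 1})"
    and p: "p \<in> {1..n}" and R: "R \<subseteq> {1..n} - {p}" and R_card: "k < card R"
    and b: "b \<in> {1,2,3}" and q: "q \<in> {1,2,3}" and r: "r \<in> {1..n}"
  shows "\<forall>C \<in> code n k lam. \<forall>D \<in> code n k lam.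
      (\<forall>a < 2 ^ n. \<forall>i \<in> R.
          C i b a + C i q (flip_digit a p) = D i b a + D i q (flip_digit a p))
      \<longrightarrow> (\<forall>a < 2 ^ n.
            C p b a = D p b a \<and> C p q a = D p q a \<and>
            C r b a + C r q (flip_digit a p) = D r b a + D r q (flip_digit a p))"
proof (intro ballI impI allI)
  fix C D and a :: nat
  assume C: "C \<in> code n k lam" and D: "D \<in> code n k lam" and a: "a < 2 ^ n"
    and agree: "\<forall>a < 2 ^ n. \<forall>i \<in> R.
          C i b a + C i q (flip_digit a p) = D i b a + D i q (flip_digit a p)"
  define E where "E = (\<lambda>i b a. C i b a - D i b a)"
  have repair: "E p b c = 0 \<and> E p q (flip_digit c p) = 0 \<and>
      (\<forall>i\<in>{1..n}. E i b c + E i q (flip_digit c p) = 0)" if c: "c < 2 ^ n" for c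
  proof (rule code_flip_repair[OF _ lam_dist p R R_card b q c])
    show "E \<in> code n k lam"
      unfolding E_def using C D by (rule diff_mem_code)
    show "\<forall>i\<in>R. E i b c + E i q (flip_digit c p) = 0"
      using agree c by (simp add: E_def algebra_simps)
  qed
  note at_a = repair[OF a] and at_flip = repair[OF flip_digit_less_power[OF p a]]
  show "C p b a = D p b a \<and> C p q a = D p q a \<and>
      C r b a + C r q (flip_digit a p) = D r b a + D r q (flip_digit a p)"
    using at_a at_flip r unfolding flip_digit_flip_digit E_def by (auto simp: algebra_simps)
qed

theorem mainTheorem3:
  fixes n k :: nat and lam :: "nat \<Rightarrow> nat \<Rightarrow> 'a::field" and R :: "nat set"
  assumes fin: "finite (UNIV :: 'a set)"
    and k1: "1 \<le> k" and kn: "k \<le> n - 3" and n3: "3 \<le> n"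
    and card_F: "card (UNIV :: 'a set) \<ge> 2 * n"
    and lam_dist: "inj_on (\<lambda>(i, j). lam i j) ({1..n} \<times> {0, 1})"
    and R_sub: "R \<subseteq> {1..n} - {1, 2}" and R_card: "card R = k + 1"
  shows
   "(\<forall>C \<in> code n k lam. \<forall>D \<in> code n k lam.
      (\<forall>a < 2 ^ n. \<forall>i \<in> R.
          C i 1 a + C i 2 (setdig a 1 ((digit a 1 + 1) mod 2))
        = D i 1 a + D i 2 (setdig a 1 ((digit a 1 + 1) mod 2)))
      \<longrightarrow> (\<forall>a < 2 ^ n.
            C 1 1 a = D 1 1 a \<and> C 1 2 a = D 1 2 a \<and>
            C 2 1 a + C 2 2 (setdig a 1 ((digit a 1 + 1) mod 2))
              = D 2 1 a + D 2 2 (setdig a 1 ((digit a 1 + 1) mod 2))))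
    \<and>
    (\<forall>C \<in> code n k lam. \<forall>D \<in> code n k lam.
      (\<forall>a < 2 ^ n. \<forall>i \<in> R.
          C i 1 a + C i 3 (setdig a 2 ((digit a 2 + 1) mod 2))
        = D i 1 a + D i 3 (setdig a 2 ((digit a 2 + 1) mod 2)))
      \<longrightarrow> (\<forall>a < 2 ^ n.
            C 2 1 a = D 2 1 a \<and> C 2 3 a = D 2 3 a \<and>
            C 1 1 a + C 1 3 (setdig a 2 ((digit a 2 + 1) mod 2))
              = D 1 1 a + D 1 3 (setdig a 2 ((digit a 2 + 1) mod 2))))"
proof -
  have nodes: "(1::nat) \<in> {1..n}" "(2::nat) \<in> {1..n}"
    using n3 by auto
  have "R \<subseteq> {1..n} - {1}" "R \<subseteq> {1..n} - {2}" "k < card R"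
    using R_sub R_card by auto
  with nodes lam_dist show ?thesis
    by (intro conjI code_flip_repair_determines) auto
qed

end
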